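(* Every cograph is spectrally threshold dominated.
   Context: All graphs are finite and simple. Cographs are defined recursively: the single-node graph $K_1$ is a cograph; the disjoint union of cographs is a cograph; the complement of a cograph is a cograph. For a graph $G$ on $n$ nodes, the Laplacian eigenvalues (eigenvalues of $L(G)=D(G)-A(G)$) are $\lambda_1(G)\ge\dots\ge\lambda_n(G)=0$. A threshold graph is a graph obtainable from the empty graph by repeatedly adding a new node that is either isolated or adjacent to all previously added nodes. A graph $G$ on $n$ nodes with $m$ edges is spectrally threshold dominated if for each $k\in\{1,\dots,n\}$ there is a threshold graph $T_k$ on $n$ nodes with $m$ edges satisfying $\sum_{i=1}^k\lambda_i(T_k)\ge\sum_{i=1}^k\lambda_i(G)$. *)

theory Defs
  imports "Jordan_Normal_Form.Char_Poly"
begin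

definition simple_graph :: "'a set \<Rightarrow> ('a \<Rightarrow> 'a \<Rightarrow> bool) \<Rightarrow> bool" where
  "simple_graph V E \<longleftrightarrow> finite V \<and> (\<forall>u v. E u v \<longrightarrow> u \<in> V \<and> v \<in> V \<and> u \<noteq> v \<and> E v u)"

definition graph_union :: "('a \<Rightarrow> 'a \<Rightarrow> bool) \<Rightarrow> ('a \<Rightarrow> 'a \<Rightarrow> bool) \<Rightarrow> ('a \<Rightarrow> 'a \<Rightarrow> bool)" where
  "graph_union E1 E2 = (\<lambda>u v. E1 u v \<or> E2 u v)"

definition graph_compl :: "'a set \<Rightarrow> ('a \<Rightarrow> 'a \<Rightarrow> bool) \<Rightarrow> ('a \<Rightarrow> 'a \<Rightarrow> bool)" where
  "graph_compl V E = (\<lambda>u v. u \<in> V \<and> v \<in> V \<and> u \<noteq> v \<and> \<not> E u v)"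

inductive cograph :: "'a set \<Rightarrow> ('a \<Rightarrow> 'a \<Rightarrow> bool) \<Rightarrow> bool" where
  single: "cograph {v} (\<lambda>_ _. False)"
| union: "cograph V1 E1 \<Longrightarrow> cograph V2 E2 \<Longrightarrow> V1 \<inter> V2 = {} \<Longrightarrow>
            cograph (V1 \<union> V2) (graph_union E1 E2)"
| compl: "cograph V E \<Longrightarrow> cograph V (graph_compl V E)"

inductive threshold :: "'a set \<Rightarrow> ('a \<Rightarrow> 'a \<Rightarrow> bool) \<Rightarrow> bool" where
  empty: "threshold {} (\<lambda>_ _. False)"
| isolated: "threshold V E \<Longrightarrow> v \<notin> V \<Longrightarrow> threshold (insert v V) E"
| dominating: "threshold V E \<Longrightarrow> v \<notin> V \<Longrightarrow>
     threshold (insert v V) (\<lambda>x y. E x y \<or> (x = v \<and> y \<in> V) \<or> (y = v \<and> x \<in> V))"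

definition num_edges :: "'a set \<Rightarrow> ('a \<Rightarrow> 'a \<Rightarrow> bool) \<Rightarrow> nat" where
  "num_edges V E = card {{u, v} | u v. u \<in> V \<and> v \<in> V \<and> E u v}"

definition degree :: "'a set \<Rightarrow> ('a \<Rightarrow> 'a \<Rightarrow> bool) \<Rightarrow> 'a \<Rightarrow> nat" where
  "degree V E u = card {v \<in> V. E u v}"

text \<open>Laplacian matrix L = D - A with respect to a fixed enumeration of V
  (the spectrum does not depend on the enumeration).\<close>
definition vertex_enum :: "'a set \<Rightarrow> nat \<Rightarrow> 'a" where
  "vertex_enum V = (SOME f. bij_betw f {0..<card V} V)"

definition laplacian :: "'a set \<Rightarrow> ('a \<Rightarrow> 'a \<Rightarrow> bool) \<Rightarrow> real mat" where
  "laplacian V E = (let f = vertex_enum V in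
     mat (card V) (card V) (\<lambda>(i, j).
       if i = j then real (degree V E (f i)) else if E (f i) (f j) then -1 else 0))"

definition lap_eigenvalues :: "'a set \<Rightarrow> ('a \<Rightarrow> 'a \<Rightarrow> bool) \<Rightarrow> real list" where
  "lap_eigenvalues V E = (THE ls. sorted_wrt (\<ge>) ls \<and>
      char_poly (laplacian V E) = (\<Prod>a\<leftarrow>ls. [:- a, 1:]))"

definition lap_top_sum :: "'a set \<Rightarrow> ('a \<Rightarrow> 'a \<Rightarrow> bool) \<Rightarrow> nat \<Rightarrow> real" where
  "lap_top_sum V E k = (\<Sum>i<k. lap_eigenvalues V E ! i)"

definition spectrally_threshold_dominated :: "'a set \<Rightarrow> ('a \<Rightarrow> 'a \<Rightarrow> bool) \<Rightarrow> bool" where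
  "spectrally_threshold_dominated V E \<longleftrightarrow>
     (\<forall>k \<in> {1..card V}. \<exists>(T :: nat set) F. threshold T F \<and> card T = card V \<and>
        num_edges T F = num_edges V E \<and> lap_top_sum T F k \<ge> lap_top_sum V E k)"

end

theory Submission
  imports Defs
begin

text \<open>
  Along the construction of a cograph its Laplacian spectrum can be tracked exactly: a disjoint
  union multiplies characteristic polynomials, and complementing a graph on n vertices keeps one
  eigenvalue 0 and replaces every other eigenvalue mu by n - mu. By induction along the same
  construction, any k Laplacian eigenvalues of a cograph with n vertices and m edges sum to at
  most min(2m, m + k(k+1)/2, kn). Conversely, for each k a threshold graph with n vertices and
  m edges attains this bound with k of its eigenvalues. It is built vertex by vertex: an isolated
  vertex is added when the bound for one vertex less suffices, and a dominating vertex otherwise,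
  which raises every nonzero eigenvalue by one and adds the eigenvalue n.
\<close>

section \<open>Determinant identities\<close>

lemma det_scale_first_col:
  assumes B: "(B :: 'a :: comm_ring_1 mat) \<in> carrier_mat n n" and n: "0 < n"
  shows "det (mat n n (\<lambda>(i,j). if j = 0 then c * B $$ (i,0) else B $$ (i,j))) = c * det B"
proof -
  let ?M = "mat n n (\<lambda>(i,j). if j = 0 then c * B $$ (i,0) else B $$ (i,j))"
  have "transpose_mat ?M = multrow 0 c (transpose_mat B)"
    by (rule eq_matI) (use B in auto)
  then have "det (transpose_mat ?M) = c * det (transpose_mat B)"
    using det_multrow[OF n, of "transpose_mat B" c] B by simp
  then show ?thesis using det_transpose[OF B] det_transpose[of ?M n] by simp
qed

lemma det_add_first_col:
  assumes B: "(B :: 'a :: comm_ring_1 mat) \<in> carrier_mat n n"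
  shows "det (mat n n (\<lambda>(i,j). if j = 0 then B $$ (i,0) else B $$ (i,j) + a * B $$ (i,0))) = det B"
proof -
  define W where "W = mat n n (\<lambda>(i,j). if i = j then 1 else if i = 0 then a else (0 :: 'a))"
  have W: "W \<in> carrier_mat n n" by (simp add: W_def)
  have "det W = 1"
    using det_upper_triangular[OF _ W]
    by (auto simp: W_def upper_triangular_def diag_mat_def intro!: prod_list_neutral)
  have entry: "(B * W) $$ (i,j) = (if j = 0 then B $$ (i,0) else B $$ (i,j) + a * B $$ (i,0))"
    if "i < n" "j < n" for i j
  proof -
    have "(B * W) $$ (i,j)
        = (\<Sum>k = 0..<n. (if k = j then B $$ (i,k) else 0) + (if k = 0 \<and> j \<noteq> 0 then a * B $$ (i,k) else 0))"
      using B W that by (auto simp: scalar_prod_def W_def mult.commute intro: sum.cong)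
    then show ?thesis using that by (simp add: sum.distrib)
  qed
  have "B * W = mat n n (\<lambda>(i,j). if j = 0 then B $$ (i,0) else B $$ (i,j) + a * B $$ (i,0))"
    by (rule eq_matI) (use B W entry in auto)
  then show ?thesis using det_mult[OF B W] \<open>det W = 1\<close> by simp
qed

lemma det_sum_into_first_col:
  assumes B: "(B :: 'a :: comm_ring_1 mat) \<in> carrier_mat n n"
  shows "det (mat n n (\<lambda>(i,j). if j = 0 then (\<Sum>k<n. B $$ (i,k)) else B $$ (i,j))) = det B"
proof -
  define U where "U = mat n n (\<lambda>(i,j). if i = j \<or> j = 0 then 1 else (0 :: 'a))"
  have U: "U \<in> carrier_mat n n" by (simp add: U_def)
  have "det U = 1"
    using det_lower_triangular[OF _ U] by (auto simp: U_def diag_mat_def intro!: prod_list_neutral)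
  have entry: "(B * U) $$ (i,j) = (if j = 0 then (\<Sum>k<n. B $$ (i,k)) else B $$ (i,j))"
    if "i < n" "j < n" for i j
  proof -
    have "(B * U) $$ (i,j) = (\<Sum>k<n. if j = 0 \<or> k = j then B $$ (i,k) else 0)"
      using B U that by (auto simp: scalar_prod_def lessThan_atLeast0 U_def intro: sum.cong)
    then show ?thesis using that by (cases "j = 0") auto
  qed
  have "B * U = mat n n (\<lambda>(i,j). if j = 0 then (\<Sum>k<n. B $$ (i,k)) else B $$ (i,j))"
    by (rule eq_matI) (use B U entry in auto)
  then show ?thesis using det_mult[OF B U] \<open>det U = 1\<close> by simp
qed

lemma det_add_all_ones:
  fixes A :: "'a :: comm_ring_1 mat"
  assumes A: "A \<in> carrier_mat n n" and row_sum: "\<And>i. i < n \<Longrightarrow> (\<Sum>j<n. A $$ (i,j)) = c"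
  shows "c * det (A + mat n n (\<lambda>_. 1)) = (c + of_nat n) * det A"
proof (cases "n = 0")
  case True
  then show ?thesis using A by simp
next
  case False
  define J where "J = (mat n n (\<lambda>_. 1) :: 'a mat)"
  define N where "N = mat n n (\<lambda>(i,j). if j = 0 then 1 else A $$ (i,j))"
  define M where "M = mat n n (\<lambda>(i,j). if j = 0 then N $$ (i,0) else N $$ (i,j) + 1 * N $$ (i,0))"
  have N: "N \<in> carrier_mat n n" and M: "M \<in> carrier_mat n n" and AJ: "A + J \<in> carrier_mat n n"
    using A by (simp_all add: N_def M_def J_def)
  have row_sum_J: "(\<Sum>k<n. A $$ (i,k) + 1) = c + of_nat n" if "i < n" for i
    using row_sum[OF that] by (simp add: sum.distrib)
  have "det A = det (mat n n (\<lambda>(i,j). if j = 0 then (\<Sum>k<n. A $$ (i,k)) else A $$ (i,j)))"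
    by (rule det_sum_into_first_col[OF A, symmetric])
  also have "mat n n (\<lambda>(i,j). if j = 0 then (\<Sum>k<n. A $$ (i,k)) else A $$ (i,j))
      = mat n n (\<lambda>(i,j). if j = 0 then c * N $$ (i,0) else N $$ (i,j))"
    by (rule eq_matI) (auto simp: N_def row_sum)
  also have "det \<dots> = c * det N" by (rule det_scale_first_col[OF N]) (use False in simp)
  finally have det_A: "det A = c * det N" .
  have "det (A + J) = det (mat n n (\<lambda>(i,j). if j = 0 then (\<Sum>k<n. (A + J) $$ (i,k)) else (A + J) $$ (i,j)))"
    by (rule det_sum_into_first_col[OF AJ, symmetric])
  also have "mat n n (\<lambda>(i,j). if j = 0 then (\<Sum>k<n. (A + J) $$ (i,k)) else (A + J) $$ (i,j))
      = mat n n (\<lambda>(i,j). if j = 0 then (c + of_nat n) * M $$ (i,0) else M $$ (i,j))"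
    by (rule eq_matI) (use A in \<open>auto simp: M_def N_def J_def row_sum_J\<close>)
  also have "det \<dots> = (c + of_nat n) * det M" by (rule det_scale_first_col[OF M]) (use False in simp)
  also have "det M = det N" unfolding M_def by (rule det_add_first_col[OF N])
  finally show ?thesis using det_A unfolding J_def by (simp add: algebra_simps)
qed

lemma signof_mult_self: "signof p * signof p = (1 :: 'a :: comm_ring_1)"
  by (cases p rule: sign_cases) auto

lemma det_permute_rows_cols:
  assumes A: "(A :: 'a :: comm_ring_1 mat) \<in> carrier_mat n n" and p: "p permutes {0..<n}"
  shows "det (mat n n (\<lambda>(i,j). A $$ (p i, p j))) = det A"
proof -
  define A' where "A' = mat n n (\<lambda>(i,j). A $$ (i, p j))"
  have A': "A' \<in> carrier_mat n n" unfolding A'_def by auto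
  have p_lt: "\<And>i. i < n \<Longrightarrow> p i < n" using p by (simp add: permutes_in_image)
  have "det A' = det (transpose_mat A')" using det_transpose[OF A'] by simp
  also have "transpose_mat A' = mat n n (\<lambda>(i,j). transpose_mat A $$ (p i, j))"
    by (rule eq_matI) (use A in \<open>auto simp: A'_def p_lt\<close>)
  also have "det \<dots> = signof p * det (transpose_mat A)"
    by (rule det_permute_rows[OF _ p]) (use A in auto)
  finally have det_A': "det A' = signof p * det A" using det_transpose[OF A] by simp
  have "mat n n (\<lambda>(i,j). A $$ (p i, p j)) = mat n n (\<lambda>(i,j). A' $$ (p i, j))"
    by (rule eq_matI) (auto simp: A'_def p_lt)
  also have "det \<dots> = signof p * det A'" by (rule det_permute_rows[OF A' p])
  finally show ?thesis by (simp add: det_A' mult.assoc[symmetric] signof_mult_self)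
qed

definition det_enum :: "nat \<Rightarrow> (nat \<Rightarrow> 'a) \<Rightarrow> ('a \<Rightarrow> 'a \<Rightarrow> 'b :: comm_ring_1) \<Rightarrow> 'b" where
  "det_enum n g h = det (mat n n (\<lambda>(i,j). h (g i) (g j)))"

lemma det_enum_bij_eq:
  assumes f: "bij_betw f {0..<n} V" and g: "bij_betw g {0..<n} V"
  shows "det_enum n f h = det_enum n g h"
proof -
  define p where "p = (\<lambda>i. if i < n then inv_into {0..<n} f (g i) else i)"
  have f_p: "\<And>i. i < n \<Longrightarrow> f (p i) = g i"
    using f g by (simp add: p_def bij_betw_inv_into_right bij_betw_apply)
  have "bij_betw (inv_into {0..<n} f \<circ> g) {0..<n} {0..<n}"
    by (rule bij_betw_trans[OF g bij_betw_inv_into[OF f]])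
  then have "bij_betw p {0..<n} {0..<n}" by (rule bij_betw_cong[THEN iffD1, rotated]) (auto simp: p_def)
  then have p: "p permutes {0..<n}" by (rule bij_imp_permutes) (auto simp: p_def)
  have p_lt: "\<And>i. i < n \<Longrightarrow> p i < n" using p by (simp add: permutes_in_image)
  define A where "A = mat n n (\<lambda>(i,j). h (f i) (f j))"
  have "det_enum n g h = det (mat n n (\<lambda>(i,j). A $$ (p i, p j)))"
    unfolding det_enum_def by (rule arg_cong[where f = det], rule eq_matI) (auto simp: A_def p_lt f_p)
  also have "\<dots> = det A" by (rule det_permute_rows_cols[OF _ p]) (simp add: A_def)
  finally show ?thesis by (simp add: A_def det_enum_def)
qed

lemma det_enum_uminus: "det_enum n g (\<lambda>u v. - h u v) = (-1) ^ n * det_enum n g h"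
proof -
  have "mat n n (\<lambda>(i,j). - h (g i) (g j)) = (-1) \<cdot>\<^sub>m mat n n (\<lambda>(i,j). h (g i) (g j))"
    by (rule eq_matI) auto
  then show ?thesis unfolding det_enum_def by simp
qed

lemma bij_betw_append_enum:
  fixes n1 n2 :: nat
  assumes f1: "bij_betw f1 {0..<n1} V1" and f2: "bij_betw f2 {0..<n2} V2" and disj: "V1 \<inter> V2 = {}"
  shows "bij_betw (\<lambda>i. if i < n1 then f1 i else f2 (i - n1)) {0..<n1 + n2} (V1 \<union> V2)"
proof -
  have "bij_betw (\<lambda>i. i - n1) {n1..<n1 + n2} {0..<n2}"
    by (rule bij_betwI[where g = "\<lambda>i. i + n1"]) auto
  then have "bij_betw (f2 \<circ> (\<lambda>i. i - n1)) {n1..<n1 + n2} V2" using f2 by (rule bij_betw_trans)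
  from bij_betw_disjoint_Un[OF f1 this _ disj]
  have "bij_betw (\<lambda>i. if i \<in> {0..<n1} then f1 i else (f2 \<circ> (\<lambda>i. i - n1)) i)
      ({0..<n1} \<union> {n1..<n1 + n2}) (V1 \<union> V2)" by auto
  moreover have "{0..<n1} \<union> {n1..<n1 + n2} = {0..<n1 + n2}" by auto
  ultimately have "bij_betw (\<lambda>i. if i \<in> {0..<n1} then f1 i else (f2 \<circ> (\<lambda>i. i - n1)) i)
      {0..<n1 + n2} (V1 \<union> V2)" by (simp only:)
  then show ?thesis by (rule bij_betw_cong[THEN iffD1, rotated]) auto
qed

lemma simple_graphD:
  assumes "simple_graph V E" "E u v" shows "u \<in> V" "v \<in> V" "u \<noteq> v" "E v u"
  using assms unfolding simple_graph_def by auto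

lemma neighbours_subset: "simple_graph V E \<Longrightarrow> {v \<in> V. E u v} \<subseteq> V - {u}"
  unfolding simple_graph_def by auto

lemma degree_le:
  assumes G: "simple_graph V E" and u: "u \<in> V"
  shows "degree V E u \<le> card V - 1"
proof -
  have "degree V E u \<le> card (V - {u})"
    unfolding degree_def by (rule card_mono[OF _ neighbours_subset[OF G]]) (use G in \<open>simp add: simple_graph_def\<close>)
  then show ?thesis using u by simp
qed

lemma degree_compl:
  assumes G: "simple_graph V E" and u: "u \<in> V"
  shows "degree V (graph_compl V E) u = card V - 1 - degree V E u"
proof -
  have V: "finite V" using G by (simp add: simple_graph_def)
  have "{v \<in> V. graph_compl V E u v} = (V - {u}) - {v \<in> V. E u v}"
    using u by (auto simp: graph_compl_def)
  then have "degree V (graph_compl V E) u = card (V - {u}) - degree V E u"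
    unfolding degree_def using V neighbours_subset[OF G] by (simp add: card_Diff_subset)
  then show ?thesis using u V by simp
qed

lemma sum_adjacent:
  assumes G: "simple_graph V E" and g: "bij_betw g {0..<card V} V"
  shows "(\<Sum>j<card V. if E u (g j) then 1 else 0) = real (degree V E u)"
proof -
  have "(\<Sum>j<card V. if E u (g j) then 1 else (0 :: real)) = (\<Sum>v\<in>V. if E u v then 1 else 0)"
    using sum.reindex_bij_betw[OF g, of "\<lambda>v. if E u v then 1 else (0 :: real)"]
    by (simp add: lessThan_atLeast0)
  also have "\<dots> = real (degree V E u)"
    using G by (simp add: degree_def sum.If_cases simple_graph_def Int_def)
  finally show ?thesis .
qed

lemma graph_union_commute: "graph_union E1 E2 = graph_union E2 E1"
  unfolding graph_union_def by auto

lemma graph_union_empty: "graph_union F (\<lambda>_ _. False) = F"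
  unfolding graph_union_def by simp

lemma simple_graph_single: "simple_graph {v} (\<lambda>_ _. False)"
  unfolding simple_graph_def by simp

lemma simple_graph_union:
  "simple_graph V1 E1 \<Longrightarrow> simple_graph V2 E2 \<Longrightarrow> simple_graph (V1 \<union> V2) (graph_union E1 E2)"
  unfolding simple_graph_def graph_union_def by blast

lemma simple_graph_compl: "simple_graph V E \<Longrightarrow> simple_graph V (graph_compl V E)"
  unfolding simple_graph_def graph_compl_def by blast

definition edges :: "'a set \<Rightarrow> ('a \<Rightarrow> 'a \<Rightarrow> bool) \<Rightarrow> 'a set set" where
  "edges V E = {{u, v} | u v. u \<in> V \<and> v \<in> V \<and> E u v}"

lemma num_edges_eq_card_edges: "num_edges V E = card (edges V E)"
  unfolding num_edges_def edges_def ..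

lemma edges_subset_pairs: "simple_graph V E \<Longrightarrow> edges V E \<subseteq> {B. B \<subseteq> V \<and> card B = 2}"
  unfolding edges_def simple_graph_def by auto

lemma card_pairs: "finite V \<Longrightarrow> card {B. B \<subseteq> V \<and> card B = 2} = card V choose 2"
  by (rule n_subsets)

lemma finite_pairs: "finite V \<Longrightarrow> finite {B. B \<subseteq> V \<and> card B = 2}"
  by (rule finite_subset[of _ "Pow V"]) auto

lemma finite_edges: "simple_graph V E \<Longrightarrow> finite (edges V E)"
  by (meson edges_subset_pairs finite_pairs finite_subset simple_graph_def)

lemma num_edges_le:
  assumes G: "simple_graph V E"
  shows "num_edges V E \<le> card V choose 2"
proof -
  have V: "finite V" using G by (simp add: simple_graph_def)
  show ?thesis
    unfolding num_edges_eq_card_edges card_pairs[OF V, symmetric]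
    by (rule card_mono[OF finite_pairs[OF V] edges_subset_pairs[OF G]])
qed

lemma num_edges_union:
  assumes G1: "simple_graph V1 E1" and G2: "simple_graph V2 E2" and disj: "V1 \<inter> V2 = {}"
  shows "num_edges (V1 \<union> V2) (graph_union E1 E2) = num_edges V1 E1 + num_edges V2 E2"
proof -
  have "edges (V1 \<union> V2) (graph_union E1 E2) = edges V1 E1 \<union> edges V2 E2"
    unfolding edges_def graph_union_def using simple_graphD[OF G1] simple_graphD[OF G2] by blast
  moreover have "edges V1 E1 \<inter> edges V2 E2 = {}"
  proof -
    have "B \<subseteq> V1 \<inter> V2 \<and> card B = 2" if "B \<in> edges V1 E1" "B \<in> edges V2 E2" for B
      using that edges_subset_pairs[OF G1] edges_subset_pairs[OF G2] by blast
    then show ?thesis using disj by fastforce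
  qed
  ultimately show ?thesis
    unfolding num_edges_eq_card_edges using finite_edges[OF G1] finite_edges[OF G2]
    by (simp add: card_Un_disjoint)
qed

lemma num_edges_compl:
  assumes G: "simple_graph V E"
  shows "num_edges V (graph_compl V E) = (card V choose 2) - num_edges V E"
proof -
  have "edges V (graph_compl V E) = {B. B \<subseteq> V \<and> card B = 2} - edges V E"
  proof (intro equalityI subsetI)
    fix B assume "B \<in> edges V (graph_compl V E)"
    then obtain u v where B: "B = {u, v}" "u \<in> V" "v \<in> V" "u \<noteq> v" "\<not> E u v"
      unfolding edges_def graph_compl_def by blast
    have "B \<notin> edges V E"
    proof
      assume "B \<in> edges V E"
      then obtain a b where "B = {a, b}" "E a b" unfolding edges_def by blast
      with B show False using simple_graphD(4)[OF G] by (auto simp: doubleton_eq_iff)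
    qed
    then show "B \<in> {B. B \<subseteq> V \<and> card B = 2} - edges V E" using B by auto
  next
    fix B assume "B \<in> {B. B \<subseteq> V \<and> card B = 2} - edges V E"
    then show "B \<in> edges V (graph_compl V E)"
      unfolding edges_def graph_compl_def card_2_iff by blast
  qed
  then show ?thesis
    using G unfolding num_edges_eq_card_edges
    by (simp add: card_Diff_subset finite_edges edges_subset_pairs card_pairs simple_graph_def)
qed

section \<open>The characteristic polynomial of the Laplacian\<close>

definition char_entry :: "'a set \<Rightarrow> ('a \<Rightarrow> 'a \<Rightarrow> bool) \<Rightarrow> real \<Rightarrow> 'a \<Rightarrow> 'a \<Rightarrow> real" where
  "char_entry V E x u v = (if u = v then x - real (degree V E u) else if E u v then 1 else 0)"

lemma vertex_enum_bij: "finite V \<Longrightarrow> bij_betw (vertex_enum V) {0..<card V} V"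
  unfolding vertex_enum_def by (rule someI_ex[OF ex_bij_betw_nat_finite])

lemma poly_char_poly_laplacian:
  assumes V: "finite V" and g: "bij_betw g {0..<card V} V"
  shows "poly (char_poly (laplacian V E)) x = det_enum (card V) g (char_entry V E x)"
proof -
  have f: "bij_betw (vertex_enum V) {0..<card V} V" by (rule vertex_enum_bij[OF V])
  then have inj: "\<And>i j. i < card V \<Longrightarrow> j < card V \<Longrightarrow> vertex_enum V i = vertex_enum V j \<longleftrightarrow> i = j"
    unfolding bij_betw_def inj_on_def by auto
  have L: "laplacian V E \<in> carrier_mat (card V) (card V)" by (simp add: laplacian_def Let_def)
  have "poly (char_poly (laplacian V E)) x = det_enum (card V) (vertex_enum V) (char_entry V E x)"
    unfolding char_poly_def det_enum_def
    by (rule poly_det_cong[of _ "card V"], insert L inj,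
        auto simp: char_poly_matrix_def laplacian_def Let_def char_entry_def)
  also have "\<dots> = det_enum (card V) g (char_entry V E x)" by (rule det_enum_bij_eq[OF f g])
  finally show ?thesis .
qed

text \<open>With J the all-ones matrix, x I - L(compl G) = J + A for A = -((n - x) I - L(G)), whose
  row sums all equal x - n.\<close>
lemma poly_char_poly_laplacian_compl:
  assumes G: "simple_graph V E"
  shows "(x - real (card V)) * poly (char_poly (laplacian V (graph_compl V E))) x
       = x * (-1) ^ card V * poly (char_poly (laplacian V E)) (real (card V) - x)"
proof -
  let ?n = "card V"
  have V: "finite V" using G by (simp add: simple_graph_def)
  obtain g where g: "bij_betw g {0..<?n} V" using ex_bij_betw_nat_finite[OF V] by blast
  have gV: "\<And>i. i < ?n \<Longrightarrow> g i \<in> V" using g by (auto simp: bij_betw_def)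
  have g_inj: "\<And>i j. i < ?n \<Longrightarrow> j < ?n \<Longrightarrow> g i = g j \<longleftrightarrow> i = j"
    using g unfolding bij_betw_def inj_on_def by auto
  have irrefl: "\<And>u. \<not> E u u" using simple_graphD(3)[OF G] by blast
  define A where "A = mat ?n ?n (\<lambda>(i,j). - char_entry V E (real ?n - x) (g i) (g j))"
  have A: "A \<in> carrier_mat ?n ?n" by (simp add: A_def)
  have row_sum: "(\<Sum>j<?n. A $$ (i,j)) = x - real ?n" if i: "i < ?n" for i
  proof -
    have "(\<Sum>j<?n. A $$ (i,j)) = (\<Sum>j<?n. (if j = i then x - real ?n + real (degree V E (g i)) else 0)
              - (if E (g i) (g j) then 1 else 0))"
      by (rule sum.cong) (use i g_inj irrefl in \<open>auto simp: A_def char_entry_def\<close>)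
    then show ?thesis using i sum_adjacent[OF G g] by (simp add: sum_subtractf)
  qed
  have entry: "A $$ (i,j) + 1 = char_entry V (graph_compl V E) x (g i) (g j)" if i: "i < ?n" and j: "j < ?n" for i j
    using i j g_inj[OF i j] gV[OF i] gV[OF j] degree_compl[OF G gV[OF i]] degree_le[OF G gV[OF i]]
    by (auto simp: A_def char_entry_def graph_compl_def)
  have "A + mat ?n ?n (\<lambda>_. 1) = mat ?n ?n (\<lambda>(i,j). char_entry V (graph_compl V E) x (g i) (g j))"
    by (rule eq_matI) (use A entry in auto)
  then have "(x - real ?n) * det_enum ?n g (char_entry V (graph_compl V E) x) = x * det A"
    using det_add_all_ones[OF A row_sum] by (simp add: det_enum_def)
  moreover have "det A = (-1) ^ ?n * det_enum ?n g (char_entry V E (real ?n - x))"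
    using det_enum_uminus[of ?n g "char_entry V E (real ?n - x)"] by (simp add: A_def det_enum_def)
  ultimately show ?thesis using poly_char_poly_laplacian[OF V g] by simp
qed

lemma char_entry_union_left:
  assumes G1: "simple_graph V1 E1" and G2: "simple_graph V2 E2" and disj: "V1 \<inter> V2 = {}"
    and u: "u \<in> V1"
  shows "char_entry (V1 \<union> V2) (graph_union E1 E2) x u v
      = (if v \<in> V1 then char_entry V1 E1 x u v else 0)"
proof -
  have "{w \<in> V1 \<union> V2. graph_union E1 E2 u w} = {w \<in> V1. E1 u w}"
    using u disj G1 G2 by (auto simp: graph_union_def simple_graph_def)
  then have "degree (V1 \<union> V2) (graph_union E1 E2) u = degree V1 E1 u" by (simp add: degree_def)
  moreover have "\<not> E2 u v" using u disj G2 by (auto simp: simple_graph_def)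
  moreover have "E1 u v \<Longrightarrow> v \<in> V1" using G1 by (auto simp: simple_graph_def)
  ultimately show ?thesis using u disj by (auto simp: char_entry_def graph_union_def)
qed

lemma poly_char_poly_laplacian_union:
  assumes G1: "simple_graph V1 E1" and G2: "simple_graph V2 E2" and disj: "V1 \<inter> V2 = {}"
  shows "poly (char_poly (laplacian (V1 \<union> V2) (graph_union E1 E2))) x
       = poly (char_poly (laplacian V1 E1)) x * poly (char_poly (laplacian V2 E2)) x"
proof -
  let ?n1 = "card V1" and ?n2 = "card V2" and ?h = "char_entry (V1 \<union> V2) (graph_union E1 E2) x"
  have V1: "finite V1" and V2: "finite V2" using G1 G2 by (simp_all add: simple_graph_def)
  have card_Un: "card (V1 \<union> V2) = ?n1 + ?n2" using V1 V2 disj by (simp add: card_Un_disjoint)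
  obtain f1 where f1: "bij_betw f1 {0..<?n1} V1" using ex_bij_betw_nat_finite[OF V1] by blast
  obtain f2 where f2: "bij_betw f2 {0..<?n2} V2" using ex_bij_betw_nat_finite[OF V2] by blast
  define g where "g = (\<lambda>i. if i < ?n1 then f1 i else f2 (i - ?n1))"
  have g: "bij_betw g {0..<card (V1 \<union> V2)} (V1 \<union> V2)"
    unfolding g_def card_Un by (rule bij_betw_append_enum[OF f1 f2 disj])
  have f1V: "\<And>i. i < ?n1 \<Longrightarrow> f1 i \<in> V1" and f2V: "\<And>i. i < ?n2 \<Longrightarrow> f2 i \<in> V2"
    using f1 f2 by (auto simp: bij_betw_def)
  have right: "?h u v = (if v \<in> V2 then char_entry V2 E2 x u v else 0)" if "u \<in> V2" for u v
    using char_entry_union_left[OF G2 G1 _ that, of x v] disj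
    by (simp add: graph_union_commute Un_commute Int_commute)
  define M1 where "M1 = mat ?n1 ?n1 (\<lambda>(i,j). char_entry V1 E1 x (f1 i) (f1 j))"
  define M2 where "M2 = mat ?n2 ?n2 (\<lambda>(i,j). char_entry V2 E2 x (f2 i) (f2 j))"
  have "mat (?n1 + ?n2) (?n1 + ?n2) (\<lambda>(i,j). ?h (g i) (g j))
     = four_block_mat M1 (0\<^sub>m ?n1 ?n2) (0\<^sub>m ?n2 ?n1) M2"
    by (rule eq_matI)
      (use disj f1V f2V in \<open>auto simp: M1_def M2_def g_def right char_entry_union_left[OF G1 G2 disj]\<close>)
  then have "poly (char_poly (laplacian (V1 \<union> V2) (graph_union E1 E2))) x
      = det (four_block_mat M1 (0\<^sub>m ?n1 ?n2) (0\<^sub>m ?n2 ?n1) M2)"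
    using poly_char_poly_laplacian[OF finite_UnI[OF V1 V2] g] card_Un by (simp add: det_enum_def)
  also have "\<dots> = det M1 * det M2"
    by (rule det_four_block_mat_lower_left_zero) (auto simp: M1_def M2_def)
  also have "\<dots> = poly (char_poly (laplacian V1 E1)) x * poly (char_poly (laplacian V2 E2)) x"
    by (simp add: poly_char_poly_laplacian[OF V1 f1] poly_char_poly_laplacian[OF V2 f2] det_enum_def M1_def M2_def)
  finally show ?thesis .
qed

section \<open>Laplacian spectra of unions and complements\<close>

lemma poly_prod_linear_factors:
  "poly (\<Prod>s\<in>#S. [:- s, 1:]) x = (\<Prod>s\<in>#S. x - s)" for S :: "'a :: comm_ring_1 multiset"
  by (induct S) (simp_all add: algebra_simps)

lemma poly_eqI_cofinite:
  fixes p q :: "'a :: {idom, ring_char_0} poly"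
  assumes "\<And>x. x \<noteq> a \<Longrightarrow> poly p x = poly q x"
  shows "p = q"
proof (rule ccontr)
  assume "p \<noteq> q"
  then have "finite {x. poly (p - q) x = 0}" by (intro poly_roots_finite) simp
  moreover have "UNIV - {a} \<subseteq> {x. poly (p - q) x = 0}" using assms by auto
  ultimately have "finite (UNIV :: 'a set)" by (meson finite_Diff2 finite.emptyI finite_insert finite_subset)
  then show False by (simp add: infinite_UNIV_char_0)
qed

lemma prod_mset_uminus: "(\<Prod>s\<in>#R. - f s) = (-1) ^ size R * (\<Prod>s\<in>#R. f s :: 'a :: comm_ring_1)"
  by (induct R) auto

lemma sum_mset_image_diff:
  "(\<Sum>s\<in>#R. c - s) = of_nat (size R) * c - sum_mset (R :: 'a :: comm_ring_1 multiset)"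
  by (induct R) (auto simp: algebra_simps)

lemma real_choose_two: "real (n choose 2) = real n * (real n - 1) / 2"
proof -
  have "even (n * (n - 1))" by auto
  then have "2 * (n * (n - 1) div 2) = n * (n - 1)" by simp
  then have "2 * real (n choose 2) = real n * real (n - 1)"
    unfolding choose_two by (metis of_nat_mult of_nat_numeral)
  then show ?thesis by (cases n) auto
qed

lemma two_choose_two_int: "2 * int (n choose 2) = int n * int n - int n"
proof -
  have "real (2 * (n choose 2) + n) = real (n * n)" by (simp add: real_choose_two field_simps)
  then have "int (2 * (n choose 2) + n) = int (n * n)" by (simp only: of_nat_eq_iff)
  then show ?thesis by simp
qed

text \<open>The eigenvalue 0 and the trace 2m are recorded because the complement step needs them.\<close>
definition laplacian_spectrum :: "'a set \<Rightarrow> ('a \<Rightarrow> 'a \<Rightarrow> bool) \<Rightarrow> real multiset \<Rightarrow> bool" where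
  "laplacian_spectrum V E S \<longleftrightarrow> simple_graph V E \<and> char_poly (laplacian V E) = (\<Prod>s\<in>#S. [:- s, 1:])
     \<and> size S = card V \<and> 0 \<in># S \<and> sum_mset S = 2 * real (num_edges V E)"

definition compl_spectrum :: "nat \<Rightarrow> real multiset \<Rightarrow> real multiset" where
  "compl_spectrum n S = add_mset 0 (image_mset (\<lambda>s. real n - s) (S - {#0#}))"

lemma laplacian_spectrum_single: "laplacian_spectrum {v} (\<lambda>_ _. False) {#0#}"
proof -
  have "bij_betw (\<lambda>_. v) {0..<card {v}} {v}" by (auto simp: bij_betw_def inj_on_def)
  then have "poly (char_poly (laplacian {v} (\<lambda>_ _. False))) x = x" for x
    using poly_char_poly_laplacian[of "{v}" "\<lambda>_. v"]
    by (simp add: det_enum_def char_entry_def degree_def det_single)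
  then have "char_poly (laplacian {v} (\<lambda>_ _. False)) = (\<Prod>s\<in>#{#0#}. [:- s, 1:])"
    by (intro poly_eqI_cofinite[where a = 0]) (simp add: poly_prod_linear_factors)
  moreover have "num_edges {v} (\<lambda>_ _. False) = 0" by (simp add: num_edges_def)
  ultimately show ?thesis by (simp add: laplacian_spectrum_def simple_graph_single)
qed

lemma laplacian_spectrum_union:
  assumes S1: "laplacian_spectrum V1 E1 S1" and S2: "laplacian_spectrum V2 E2 S2" and disj: "V1 \<inter> V2 = {}"
  shows "laplacian_spectrum (V1 \<union> V2) (graph_union E1 E2) (S1 + S2)"
proof -
  have G1: "simple_graph V1 E1" and G2: "simple_graph V2 E2"
    using S1 S2 by (simp_all add: laplacian_spectrum_def)
  have "char_poly (laplacian (V1 \<union> V2) (graph_union E1 E2)) = (\<Prod>s\<in>#S1 + S2. [:- s, 1:])"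
    using S1 S2 poly_char_poly_laplacian_union[OF G1 G2 disj]
    by (intro poly_eqI_cofinite[where a = 0]) (simp add: laplacian_spectrum_def)
  then show ?thesis
    using S1 S2 simple_graph_union[OF G1 G2] num_edges_union[OF G1 G2 disj] disj G1 G2
    by (auto simp: laplacian_spectrum_def card_Un_disjoint simple_graph_def algebra_simps)
qed

lemma char_poly_laplacian_compl:
  assumes G: "simple_graph V E" and S: "char_poly (laplacian V E) = (\<Prod>s\<in>#S. [:- s, 1:])"
    and size_S: "size S = card V" and zero: "0 \<in># S"
  shows "char_poly (laplacian V (graph_compl V E)) = (\<Prod>s\<in>#compl_spectrum (card V) S. [:- s, 1:])"
proof (rule poly_eqI_cofinite[where a = "real (card V)"])
  let ?n = "card V"
  define R where "R = S - {#0#}"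
  have S_R: "S = add_mset 0 R" using zero by (simp add: R_def)
  have size_R: "size R = ?n - 1" and n: "1 \<le> ?n" using size_S by (auto simp: S_R)
  fix x assume x: "x \<noteq> real ?n"
  have "(x - real ?n) * poly (char_poly (laplacian V (graph_compl V E))) x
      = x * (-1) ^ ?n * (\<Prod>s\<in>#S. real ?n - x - s)"
    using poly_char_poly_laplacian_compl[OF G, of x] by (simp add: S poly_prod_linear_factors)
  also have "\<dots> = x * (-1) ^ ?n * ((real ?n - x) * (\<Prod>s\<in>#R. - (x - (real ?n - s))))"
    by (simp add: S_R algebra_simps)
  also have "\<dots> = x * (-1) ^ ?n * ((real ?n - x) * ((-1) ^ (?n - 1) * (\<Prod>s\<in>#R. x - (real ?n - s))))"
    by (subst prod_mset_uminus) (simp add: size_R)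
  also have "\<dots> = (x - real ?n) * (x * (\<Prod>s\<in>#R. x - (real ?n - s))) * ((-1) ^ ?n * (-1) ^ (?n - 1) * (-1))"
    by (simp add: algebra_simps)
  also have "(-1 :: real) ^ ?n * (-1) ^ (?n - 1) * (-1) = 1"
  proof -
    have "?n + (?n - 1) + 1 = 2 * ?n" using n by simp
    then show ?thesis by (metis power_add power_minus1_even power_one_right)
  qed
  finally have "poly (char_poly (laplacian V (graph_compl V E))) x = x * (\<Prod>s\<in>#R. x - (real ?n - s))"
    using x by simp
  then show "poly (char_poly (laplacian V (graph_compl V E))) x
      = poly (\<Prod>s\<in>#compl_spectrum ?n S. [:- s, 1:]) x"
    unfolding poly_prod_linear_factors compl_spectrum_def R_def[symmetric]
    by (simp add: multiset.map_comp o_def)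
qed

lemma sum_mset_compl_spectrum:
  assumes "size S = n" "0 \<in># S"
  shows "sum_mset (compl_spectrum n S) = real n * (real n - 1) - sum_mset S"
proof -
  obtain R where S: "S = add_mset 0 R" using assms(2) by (metis insert_DiffM)
  then have "size R = n - 1" "1 \<le> n" using assms(1) by auto
  then show ?thesis
    by (simp add: S compl_spectrum_def multiset.map_comp o_def sum_mset_image_diff algebra_simps)
qed

lemma laplacian_spectrum_compl:
  assumes S: "laplacian_spectrum V E S"
  shows "laplacian_spectrum V (graph_compl V E) (compl_spectrum (card V) S)"
proof -
  have G: "simple_graph V E" and size_S: "size S = card V" and zero: "0 \<in># S"
    using S by (simp_all add: laplacian_spectrum_def)
  have "size (compl_spectrum (card V) S) = card V"
    using size_S zero by (auto simp: compl_spectrum_def size_Diff_singleton dest!: multi_member_split)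
  moreover have "sum_mset (compl_spectrum (card V) S) = 2 * real (num_edges V (graph_compl V E))"
    using S num_edges_le[OF G]
    by (simp add: sum_mset_compl_spectrum[OF size_S zero] num_edges_compl[OF G] laplacian_spectrum_def
        real_choose_two)
  ultimately show ?thesis
    using S char_poly_laplacian_compl[OF G _ size_S zero] simple_graph_compl[OF G]
    by (simp add: laplacian_spectrum_def compl_spectrum_def)
qed

lemma proots_prod_linear_factors: "proots (\<Prod>a\<in>#M. [:- a, 1:]) = (M :: 'a :: idom multiset)"
proof (induct M)
  case (add x M)
  have "(\<Prod>a\<in>#M. [:- a, 1:]) \<noteq> 0" by auto
  then have "proots ([:- x, 1:] * (\<Prod>a\<in>#M. [:- a, 1:])) = {#x#} + M"
    using add by (subst proots_mult) simp_all
  then show ?case by simp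
qed simp

lemma lap_eigenvalues_eq:
  assumes S: "laplacian_spectrum V E S"
  shows "lap_eigenvalues V E = rev (sorted_list_of_multiset S)"
  unfolding lap_eigenvalues_def
proof (rule the_equality)
  have prod_list: "(\<Prod>a\<leftarrow>ls. [:- a, 1:]) = (\<Prod>a\<in>#mset ls. [:- a, 1:])" for ls :: "real list"
    by (simp add: prod_mset_prod_list[symmetric])
  show "sorted_wrt (\<ge>) (rev (sorted_list_of_multiset S))
      \<and> char_poly (laplacian V E) = (\<Prod>a\<leftarrow>rev (sorted_list_of_multiset S). [:- a, 1:])"
    using S by (simp add: prod_list sorted_wrt_rev laplacian_spectrum_def)
  fix ls assume ls: "sorted_wrt (\<ge>) ls \<and> char_poly (laplacian V E) = (\<Prod>a\<leftarrow>ls. [:- a, 1:])"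
  then have "(\<Prod>a\<in>#mset ls. [:- a, 1:]) = (\<Prod>a\<in>#S. [:- a, 1:])"
    using S by (simp add: prod_list laplacian_spectrum_def)
  then have "mset ls = S" by (metis proots_prod_linear_factors)
  moreover have "sorted (rev ls)" using ls by (simp add: sorted_wrt_rev)
  ultimately show "ls = rev (sorted_list_of_multiset S)"
    by (metis mset_rev rev_rev_ident sorted_list_of_multiset_mset sorted_sort_id)
qed

lemma sum_mset_le_sum_take:
  fixes ls :: "'a :: ordered_comm_monoid_add list"
  assumes "sorted_wrt (\<ge>) ls" "U \<subseteq># mset ls" "size U = k"
  shows "sum_mset U \<le> sum_list (take k ls)"
  using assms
proof (induct ls arbitrary: U k)
  case (Cons a ls)
  show ?case
  proof (cases k)
    case (Suc k')
    have U_a: "U - {#a#} \<subseteq># mset ls" using Cons.prems(2) by (simp add: subset_eq_diff_conv)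
    obtain x where x: "x \<in># U" "x \<le> a" "U - {#x#} \<subseteq># mset ls"
    proof (cases "a \<in># U")
      case True
      then show ?thesis using that U_a by blast
    next
      case False
      obtain y where y: "y \<in># U" using Cons.prems(3) Suc by (metis multiset_nonemptyE size_empty nat.distinct(1))
      have U_ls: "U \<subseteq># mset ls" using U_a False by (simp add: diff_single_trivial)
      show ?thesis
      proof (rule that[OF y])
        show "y \<le> a" using y U_ls Cons.prems(1) by (auto dest: mset_subset_eqD)
        show "U - {#y#} \<subseteq># mset ls" using U_ls by (rule subset_mset.order_trans[OF diff_subset_eq_self])
      qed
    qed
    have "sum_mset (U - {#x#}) \<le> sum_list (take k' ls)"
      using Cons.prems x Suc by (intro Cons.hyps) (simp_all add: size_Diff_singleton)
    then show ?thesis using x Suc by (simp add: sum_mset.remove[OF x(1)] add_mono)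
  qed (use Cons.prems in simp)
qed simp

lemma lap_top_sum_eq_sum_take:
  assumes S: "laplacian_spectrum V E S" and k: "k \<le> card V"
  shows "lap_top_sum V E k = sum_list (take k (rev (sorted_list_of_multiset S)))"
proof -
  have "length (rev (sorted_list_of_multiset S)) = card V"
    using S by (metis laplacian_spectrum_def length_rev mset_sorted_list_of_multiset size_mset)
  then show ?thesis
    using k by (simp add: lap_top_sum_def lap_eigenvalues_eq[OF S] sum_list_sum_nth lessThan_atLeast0)
qed

lemma sum_mset_le_lap_top_sum:
  assumes S: "laplacian_spectrum V E S" and U: "U \<subseteq># S" "size U = k"
  shows "sum_mset U \<le> lap_top_sum V E k"
proof -
  have "k \<le> card V" using S U by (metis laplacian_spectrum_def size_mset_mono)
  then show ?thesis
    using U by (simp add: lap_top_sum_eq_sum_take[OF S] sum_mset_le_sum_take sorted_wrt_rev)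
qed

lemma lap_top_sum_eq_sum_mset:
  assumes S: "laplacian_spectrum V E S" and k: "k \<le> card V"
  obtains U where "U \<subseteq># S" "size U = k" "lap_top_sum V E k = sum_mset U"
proof
  let ?L = "rev (sorted_list_of_multiset S)"
  have "mset ?L = mset (take k ?L) + mset (drop k ?L)" by (metis append_take_drop_id mset_append)
  then show "mset (take k ?L) \<subseteq># S" by (metis mset_sorted_list_of_multiset mset_rev mset_subset_eq_add_left)
  have "length ?L = card V"
    using S by (metis laplacian_spectrum_def length_rev mset_sorted_list_of_multiset size_mset)
  then show "size (mset (take k ?L)) = k" using k by simp
  show "lap_top_sum V E k = sum_mset (mset (take k ?L))"
    by (simp add: lap_top_sum_eq_sum_take[OF S k] sum_mset_sum_list)
qed

section \<open>The eigenvalue bound for cographs\<close>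

definition spectral_bound :: "real \<Rightarrow> real \<Rightarrow> real \<Rightarrow> real" where
  "spectral_bound n m k = min (2 * m) (min (m + k * (k + 1) / 2) (k * n))"

lemma spectral_bound_le:
  "spectral_bound n m k \<le> 2 * m" "spectral_bound n m k \<le> m + k * (k + 1) / 2"
  "spectral_bound n m k \<le> k * n"
  by (simp_all add: spectral_bound_def)

lemma le_spectral_bound:
  "x \<le> 2 * m \<Longrightarrow> x \<le> m + k * (k + 1) / 2 \<Longrightarrow> x \<le> k * n \<Longrightarrow> x \<le> spectral_bound n m k"
  by (simp add: spectral_bound_def)

lemma spectral_bound_mono:
  assumes "0 \<le> j" "j \<le> k" "0 \<le> n"
  shows "spectral_bound n m j \<le> spectral_bound n m k"
proof -
  have "j * (j + 1) \<le> k * (k + 1)" "j * n \<le> k * n"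
    using assms by (auto intro: mult_mono mult_right_mono)
  then show ?thesis unfolding spectral_bound_def by (auto simp: min_def divide_right_mono)
qed

lemma spectral_bound_superadditive:
  assumes "0 \<le> a" "0 \<le> b" "0 \<le> n1" "0 \<le> n2"
  shows "spectral_bound n1 m1 a + spectral_bound n2 m2 b \<le> spectral_bound (n1 + n2) (m1 + m2) (a + b)"
proof (rule le_spectral_bound)
  note bounds = spectral_bound_le[of n1 m1 a] spectral_bound_le[of n2 m2 b]
  have "0 \<le> a * b" "0 \<le> a * n2" "0 \<le> b * n1" using assms by simp_all
  moreover have "(a + b) * (a + b + 1) / 2 = a * (a + 1) / 2 + b * (b + 1) / 2 + a * b"
    "(a + b) * (n1 + n2) = a * n1 + b * n2 + a * n2 + b * n1" "2 * (m1 + m2) = 2 * m1 + 2 * m2"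
    by (simp_all add: algebra_simps add_divide_distrib)
  ultimately show
    "spectral_bound n1 m1 a + spectral_bound n2 m2 b \<le> 2 * (m1 + m2)"
    "spectral_bound n1 m1 a + spectral_bound n2 m2 b \<le> m1 + m2 + (a + b) * (a + b + 1) / 2"
    "spectral_bound n1 m1 a + spectral_bound n2 m2 b \<le> (a + b) * (n1 + n2)"
    using bounds by linarith+
qed

lemma spectral_bound_compl:
  fixes n m j :: real
  shows "j * n - 2 * m + spectral_bound n m (n - 1 - j) \<le> spectral_bound n (n * (n - 1) / 2 - m) j"
proof (rule le_spectral_bound)
  note bounds = spectral_bound_le[of n m "n - 1 - j"]
  show "j * n - 2 * m + spectral_bound n m (n - 1 - j) \<le> 2 * (n * (n - 1) / 2 - m)"
    using bounds(3) by (simp add: algebra_simps)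
  show "j * n - 2 * m + spectral_bound n m (n - 1 - j) \<le> n * (n - 1) / 2 - m + j * (j + 1) / 2"
    using bounds(2) by (simp add: field_simps)
  show "j * n - 2 * m + spectral_bound n m (n - 1 - j) \<le> j * n"
    using bounds(1) by simp
qed

definition spectrally_bounded :: "nat \<Rightarrow> real multiset \<Rightarrow> bool" where
  "spectrally_bounded n S \<longleftrightarrow>
     (\<forall>U. U \<subseteq># S \<longrightarrow> sum_mset U \<le> spectral_bound (real n) (sum_mset S / 2) (real (size U)))"

lemma subseteq_mset_plusE:
  assumes "U \<subseteq># A + B"
  obtains U1 U2 where "U = U1 + U2" "U1 \<subseteq># A" "U2 \<subseteq># B"
proof
  show "U = (U \<inter># A) + (U - (U \<inter># A))"
    by (metis subset_mset.add_diff_inverse subset_mset.inf_le1)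
  show "U \<inter># A \<subseteq># A" by simp
  show "U - (U \<inter># A) \<subseteq># B"
    unfolding subseteq_mset_def
  proof
    fix x
    have "count U x \<le> count A x + count B x" using assms by (metis count_union subseteq_mset_def)
    then show "count (U - U \<inter># A) x \<le> count B x" by (simp add: min_def)
  qed
qed

lemma subseteq_image_msetE:
  assumes "U \<subseteq># image_mset f R"
  obtains W where "W \<subseteq># R" "U = image_mset f W"
proof -
  obtain C where "image_mset f R = U + C" using assms by (auto simp: mset_subset_eq_exists_conv)
  then obtain W C' where "R = W + C'" "U = image_mset f W" by (auto dest: image_mset_eq_plusD)
  then show ?thesis using that[of W] by simp
qed

lemma sum_mset_submset_single_zero: "U \<subseteq># {#0#} \<Longrightarrow> sum_mset U = 0"
  using nonempty_subseteq_mset_eq_single[of U 0] by (cases "U = {#}") auto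

lemma spectrally_bounded_single: "spectrally_bounded 1 {#0#}"
  unfolding spectrally_bounded_def
proof (intro allI impI)
  fix U :: "real multiset" assume "U \<subseteq># {#0#}"
  then have "U = {#} \<or> U = {#0#}" using nonempty_subseteq_mset_eq_single[of U 0] by blast
  then show "sum_mset U \<le> spectral_bound (real 1) (sum_mset {#0#} / 2) (real (size U))"
    by (auto simp: spectral_bound_def)
qed

lemma spectrally_bounded_union:
  assumes "spectrally_bounded n1 S1" "spectrally_bounded n2 S2"
  shows "spectrally_bounded (n1 + n2) (S1 + S2)"
  unfolding spectrally_bounded_def
proof (intro allI impI)
  fix U assume "U \<subseteq># S1 + S2"
  then obtain U1 U2 where U: "U = U1 + U2" "U1 \<subseteq># S1" "U2 \<subseteq># S2" by (rule subseteq_mset_plusE)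
  have "sum_mset U = sum_mset U1 + sum_mset U2" using U by simp
  also have "\<dots> \<le> spectral_bound (real n1) (sum_mset S1 / 2) (real (size U1))
      + spectral_bound (real n2) (sum_mset S2 / 2) (real (size U2))"
    using assms U unfolding spectrally_bounded_def by (meson add_mono)
  also have "\<dots> \<le> spectral_bound (real n1 + real n2) (sum_mset S1 / 2 + sum_mset S2 / 2)
      (real (size U1) + real (size U2))"
    by (rule spectral_bound_superadditive) auto
  finally show "sum_mset U \<le> spectral_bound (real (n1 + n2)) (sum_mset (S1 + S2) / 2) (real (size U))"
    using U by (simp add: add_divide_distrib)
qed

lemma spectrally_bounded_compl:
  assumes bounded: "spectrally_bounded n S" and size_S: "size S = n" and zero: "0 \<in># S"
  shows "spectrally_bounded n (compl_spectrum n S)"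
  unfolding spectrally_bounded_def
proof (intro allI impI)
  fix U assume "U \<subseteq># compl_spectrum n S"
  define R where "R = S - {#0#}"
  define m where "m = sum_mset S / 2"
  have S_R: "S = add_mset 0 R" using zero by (simp add: R_def)
  have size_R: "size R = n - 1" and n: "1 \<le> n" using size_S by (auto simp: S_R)
  have "U \<subseteq># {#0#} + image_mset (\<lambda>s. real n - s) R"
    using \<open>U \<subseteq># compl_spectrum n S\<close> by (simp add: compl_spectrum_def R_def)
  then obtain U0 U1 where U: "U = U0 + U1" "U0 \<subseteq># {#0#}" "U1 \<subseteq># image_mset (\<lambda>s. real n - s) R"
    by (rule subseteq_mset_plusE)
  obtain W where W: "W \<subseteq># R" "U1 = image_mset (\<lambda>s. real n - s) W"
    using U(3) by (rule subseteq_image_msetE)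
  define j where "j = size W"
  have j: "j \<le> n - 1" using size_mset_mono[OF W(1)] size_R by (simp add: j_def)
  have "R - W \<subseteq># S" unfolding S_R by (rule subset_mset.order_trans[OF diff_subset_eq_self]) simp
  moreover have "real (size (R - W)) = real n - 1 - real j"
    using W(1) size_R j n by (simp add: size_Diff_submset j_def)
  ultimately have "sum_mset (R - W) \<le> spectral_bound (real n) m (real n - 1 - real j)"
    using bounded unfolding spectrally_bounded_def m_def by metis
  moreover have "sum_mset R = sum_mset W + sum_mset (R - W)"
    using W(1) by (metis subset_mset.add_diff_inverse sum_mset.union)
  moreover have "m = sum_mset R / 2" unfolding m_def by (simp add: S_R)
  ultimately have bound_W: "2 * m - sum_mset W \<le> spectral_bound (real n) m (real n - 1 - real j)"
    by linarith
  have "sum_mset U = real j * real n - sum_mset W"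
    using U W sum_mset_submset_single_zero[OF U(2)] by (simp add: sum_mset_image_diff j_def)
  also have "\<dots> \<le> real j * real n - 2 * m + spectral_bound (real n) m (real n - 1 - real j)"
    using bound_W by simp
  also have "\<dots> \<le> spectral_bound (real n) (real n * (real n - 1) / 2 - m) (real j)"
    by (rule spectral_bound_compl)
  also have "\<dots> \<le> spectral_bound (real n) (real n * (real n - 1) / 2 - m) (real (size U))"
    by (rule spectral_bound_mono) (use U W in \<open>auto simp: j_def\<close>)
  also have "real n * (real n - 1) / 2 - m = sum_mset (compl_spectrum n S) / 2"
    by (simp add: sum_mset_compl_spectrum[OF size_S zero] m_def field_simps)
  finally show "sum_mset U \<le> spectral_bound (real n) (sum_mset (compl_spectrum n S) / 2) (real (size U))" .
qed

lemma cograph_bounded_spectrum: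
  "cograph V E \<Longrightarrow> \<exists>S. laplacian_spectrum V E S \<and> spectrally_bounded (card V) S"
proof (induct rule: cograph.induct)
  case (single v)
  show ?case
    using laplacian_spectrum_single[of v] spectrally_bounded_single by (intro exI[of _ "{#0#}"]) simp
next
  case (union V1 E1 V2 E2)
  then obtain S1 S2 where S: "laplacian_spectrum V1 E1 S1" "spectrally_bounded (card V1) S1"
    "laplacian_spectrum V2 E2 S2" "spectrally_bounded (card V2) S2" by blast
  then have "card (V1 \<union> V2) = card V1 + card V2"
    using union.hyps(5) by (simp add: card_Un_disjoint laplacian_spectrum_def simple_graph_def)
  then show ?case
    using laplacian_spectrum_union[OF S(1,3) union.hyps(5)] spectrally_bounded_union[OF S(2,4)] by auto
next
  case (compl V E)
  then obtain S where S: "laplacian_spectrum V E S" and bounded: "spectrally_bounded (card V) S" by blast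
  then have "size S = card V" "0 \<in># S" by (simp_all add: laplacian_spectrum_def)
  then show ?case
    using laplacian_spectrum_compl[OF S] spectrally_bounded_compl[OF bounded] by blast
qed

lemma cograph_lap_top_sum_le:
  assumes G: "cograph V E" and k: "k \<le> card V"
  shows "lap_top_sum V E k \<le> spectral_bound (card V) (num_edges V E) k"
proof -
  obtain S where S: "laplacian_spectrum V E S" and bounded: "spectrally_bounded (card V) S"
    using cograph_bounded_spectrum[OF G] by blast
  obtain U where U: "U \<subseteq># S" "size U = k" "lap_top_sum V E k = sum_mset U"
    using lap_top_sum_eq_sum_mset[OF S k] .
  have "sum_mset U \<le> spectral_bound (card V) (sum_mset S / 2) (size U)"
    using bounded U(1) by (simp add: spectrally_bounded_def)
  then show ?thesis using U S by (simp add: laplacian_spectrum_def)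
qed

section \<open>Threshold graphs attaining the bound\<close>

definition dominate :: "'a set \<Rightarrow> 'a \<Rightarrow> ('a \<Rightarrow> 'a \<Rightarrow> bool) \<Rightarrow> 'a \<Rightarrow> 'a \<Rightarrow> bool" where
  "dominate V v F = (\<lambda>x y. F x y \<or> (x = v \<and> y \<in> V) \<or> (y = v \<and> x \<in> V))"

lemma laplacian_spectrum_isolated:
  assumes S: "laplacian_spectrum V F S" and v: "v \<notin> V"
  shows "laplacian_spectrum (insert v V) F (add_mset 0 S)"
    and "num_edges (insert v V) F = num_edges V F"
proof -
  have G: "simple_graph V F" using S by (simp add: laplacian_spectrum_def)
  have disj: "V \<inter> {v} = {}" using v by simp
  show "laplacian_spectrum (insert v V) F (add_mset 0 S)"
    using laplacian_spectrum_union[OF S laplacian_spectrum_single disj] by (simp add: graph_union_empty)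
  show "num_edges (insert v V) F = num_edges V F"
    using num_edges_union[OF G simple_graph_single disj] by (simp add: graph_union_empty num_edges_def)
qed

lemma dominate_eq_compl:
  assumes G: "simple_graph V F" and v: "v \<notin> V"
  shows "dominate V v F = graph_compl (insert v V) (graph_union (graph_compl V F) (\<lambda>_ _. False))"
  unfolding dominate_def graph_compl_def graph_union_def using simple_graphD[OF G] v by (intro ext) blast

lemma compl_spectrum_dominate:
  assumes "0 \<in># S"
  shows "compl_spectrum (Suc n) (add_mset 0 (compl_spectrum n S))
     = add_mset 0 (add_mset (real (Suc n)) (image_mset (\<lambda>s. s + 1) (S - {#0#})))"
  unfolding compl_spectrum_def by (simp add: multiset.map_comp o_def add.commute)

lemma laplacian_spectrum_dominate:
  assumes S: "laplacian_spectrum V F S" and v: "v \<notin> V"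
  shows "laplacian_spectrum (insert v V) (dominate V v F)
      (add_mset 0 (add_mset (real (Suc (card V))) (image_mset (\<lambda>s. s + 1) (S - {#0#}))))"
    and "num_edges (insert v V) (dominate V v F) = num_edges V F + card V"
proof -
  have G: "simple_graph V F" and zero: "0 \<in># S" using S by (simp_all add: laplacian_spectrum_def)
  have V: "finite V" using G by (simp add: simple_graph_def)
  have disj: "V \<inter> {v} = {}" using v by simp
  have S': "laplacian_spectrum (insert v V) (graph_union (graph_compl V F) (\<lambda>_ _. False))
      (add_mset 0 (compl_spectrum (card V) S))"
    using laplacian_spectrum_isolated(1)[OF laplacian_spectrum_compl[OF S] v] by (simp add: graph_union_empty)
  show "laplacian_spectrum (insert v V) (dominate V v F)
      (add_mset 0 (add_mset (real (Suc (card V))) (image_mset (\<lambda>s. s + 1) (S - {#0#}))))"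
    using laplacian_spectrum_compl[OF S'] V v
    by (simp add: dominate_eq_compl[OF G v] compl_spectrum_dominate[OF zero])
  have "num_edges (insert v V) (dominate V v F) = (Suc (card V) choose 2) - ((card V choose 2) - num_edges V F)"
    using num_edges_compl[OF simple_graph_union[OF simple_graph_compl[OF G] simple_graph_single]]
      num_edges_union[OF simple_graph_compl[OF G] simple_graph_single disj] num_edges_compl[OF G] V v
    by (simp add: dominate_eq_compl[OF G v] graph_union_empty num_edges_def)
  then show "num_edges (insert v V) (dominate V v F) = num_edges V F + card V"
    using num_edges_le[OF G] by (simp add: numeral_2_eq_2)
qed

lemma spectral_bound_dominate_step:
  fixes n m k :: nat
  assumes "n \<le> m" "1 \<le> k"
    and "spectral_bound (Suc n) m k \<le> 2 * real m - real n + real k"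
  shows "spectral_bound (Suc n) m k \<le> real n + real k + spectral_bound n (m - n) (k - 1)"
proof -
  have m: "real (m - n) = real m - real n" and k: "real (k - 1) = real k - 1"
    using assms(1,2) by simp_all
  note bounds = assms(3) spectral_bound_le[of "Suc n" m k]
  have "spectral_bound (Suc n) m k - real n - real k \<le> spectral_bound n (m - n) (k - 1)"
  proof (rule le_spectral_bound)
    show "spectral_bound (Suc n) m k - real n - real k \<le> 2 * real (m - n)"
      using bounds(1) by (simp add: m algebra_simps)
    show "spectral_bound (Suc n) m k - real n - real k
        \<le> real (m - n) + real (k - 1) * (real (k - 1) + 1) / 2"
      using bounds(3) unfolding m k by (simp add: field_simps)
    show "spectral_bound (Suc n) m k - real n - real k \<le> real (k - 1) * real n"
      using bounds(4) unfolding k by (simp add: algebra_simps)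
  qed
  then show ?thesis by simp
qed

lemma dominate_step_arith:
  fixes n k m P C :: int
  assumes k: "1 \<le> k" "k \<le> n" and P: "2 * P = k * k + k" and C: "2 * C = n * n - n"
    and not_isolated: "m \<le> C \<Longrightarrow> k < n \<and> k * n < 2 * m \<and> k * n < m + P"
  shows "n \<le> m" and "k < n \<Longrightarrow> P + n \<le> m + k"
proof -
  show "n \<le> m"
  proof (cases "m \<le> C")
    case True
    then have "k * n < 2 * m" "k * n < m + P" using not_isolated by auto
    moreover have "k = 1 \<or> 2 * n \<le> k * n" using k by (auto intro: mult_right_mono)
    ultimately show ?thesis using P by auto
  next
    case False
    have "0 \<le> (n - 1) * (n - 2)" using k by (cases "n = 1") auto
    then have "2 * n \<le> n * n - n + 2" by (simp add: algebra_simps)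
    then show ?thesis using False C by linarith
  qed
  show "P + n \<le> m + k" if "k < n"
  proof (rule ccontr)
    assume "\<not> P + n \<le> m + k"
    then have small: "m + k + 1 \<le> P + n" by simp
    have "k * (k - 1) \<le> (n - 1) * (n - 2)" using k that by (intro mult_mono) auto
    then have "k * k - k \<le> n * n - 3 * n + 2" by (simp add: algebra_simps)
    then have "m \<le> C" using small P C by linarith
    then have "k * n < 2 * m" "k * n + 1 \<le> m + P" using not_isolated by auto
    moreover have "(k - 1) * (k + 1) \<le> (k - 1) * n" using k that by (intro mult_left_mono) auto
    then have "k * k - 1 \<le> k * n - n" by (simp add: algebra_simps)
    ultimately show False using small P by linarith
  qed
qed

lemma spectral_bound_step_cases:
  fixes n m k :: nat
  assumes k: "1 \<le> k" "k \<le> n"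
  obtains (isolated) "m \<le> n choose 2" "k = n \<or> spectral_bound (Suc n) m k \<le> spectral_bound n m k"
    | (dominate) "n \<le> m" "spectral_bound (Suc n) m k \<le> real n + real k + spectral_bound n (m - n) (k - 1)"
proof -
  define C P where "C = n choose 2" and "P = Suc k choose 2"
  have "real k * (real k + 1) / 2 = real P" by (simp add: P_def real_choose_two algebra_simps)
  then have bound_Suc: "spectral_bound (Suc n) m k = min (2 * real m) (min (real m + real P) (real k * real n + real k))"
    and bound: "spectral_bound n m k = min (2 * real m) (min (real m + real P) (real k * real n))"
    by (simp_all add: spectral_bound_def algebra_simps)
  show ?thesis
  proof (cases "m \<le> C \<and> (k = n \<or> 2 * m \<le> k * n \<or> m + P \<le> k * n)")
    case True
    then have "2 * real m \<le> real k * real n \<or> real m + real P \<le> real k * real n \<or> k = n"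
      by (metis of_nat_add of_nat_le_iff of_nat_mult of_nat_numeral)
    then have "k = n \<or> spectral_bound (Suc n) m k \<le> spectral_bound n m k"
      unfolding bound_Suc bound by (auto simp: min_def)
    then show ?thesis using True isolated by (simp add: C_def)
  next
    case False
    have C: "2 * int C = int n * int n - int n" and P: "2 * int P = int k * int k + int k"
      using two_choose_two_int[of n] two_choose_two_int[of "Suc k"] by (simp_all add: C_def P_def algebra_simps)
    have "int m \<le> int C \<Longrightarrow> int k < int n \<and> int k * int n < 2 * int m \<and> int k * int n < int m + int P"
      using False k by (simp flip: of_nat_mult)
    note dominate_step_arith[OF _ _ P C this]
    then have "n \<le> m" and small: "k < n \<Longrightarrow> P + n \<le> m + k" using k by simp_all
    moreover have "spectral_bound (Suc n) m k \<le> 2 * real m - real n + real k"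
    proof (cases "k = n")
      case True
      then show ?thesis using spectral_bound_le(1)[of "Suc n" m k] by simp
    next
      case False
      then have "P + n \<le> m + k" using small k by simp
      then have "real P + real n \<le> real m + real k" by (simp flip: of_nat_add)
      then have "real m + real P \<le> 2 * real m - real n + real k" by simp
      then show ?thesis unfolding bound_Suc by linarith
    qed
    ultimately show ?thesis using dominate spectral_bound_dominate_step k by simp
  qed
qed

text \<open>The witnesses U avoid the eigenvalue 0 since a dominating vertex raises only the nonzero
  eigenvalues.\<close>
definition threshold_attains :: "nat \<Rightarrow> nat \<Rightarrow> nat \<Rightarrow> bool" where
  "threshold_attains n m k \<longleftrightarrow> (\<exists>F S U. threshold {0..<n} F \<and> laplacian_spectrum {0..<n} F S \<and>
     num_edges {0..<n} F = m \<and> U \<subseteq># S - {#0#} \<and> size U = k \<and> spectral_bound n m k \<le> sum_mset U)"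

lemma threshold_attains_one: "threshold_attains 1 0 0"
proof -
  have "threshold {0} (\<lambda>_ _ :: nat. False)" using threshold.isolated[OF threshold.empty] by simp
  moreover have "num_edges {0 :: nat} (\<lambda>_ _. False) = 0" by (simp add: num_edges_def)
  ultimately show ?thesis
    using laplacian_spectrum_single[of "0 :: nat"] unfolding threshold_attains_def
    by (intro exI[of _ "\<lambda>_ _. False"] exI[of _ "{#0#}"] exI[of _ "{#}"]) (simp add: spectral_bound_def)
qed

lemma threshold_attains_zero: "threshold_attains n m k \<Longrightarrow> threshold_attains n m 0"
  unfolding threshold_attains_def by (fastforce simp: spectral_bound_def)

lemma threshold_attains_isolated:
  assumes "threshold_attains n m k" and "spectral_bound (Suc n) m k \<le> spectral_bound n m k"
  shows "threshold_attains (Suc n) m k"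
proof -
  obtain F S U where F: "threshold {0..<n} F" "laplacian_spectrum {0..<n} F S" "num_edges {0..<n} F = m"
    and U: "U \<subseteq># S - {#0#}" "size U = k" "spectral_bound n m k \<le> sum_mset U"
    using assms(1) unfolding threshold_attains_def by blast
  have V: "{0..<Suc n} = insert n {0..<n}" by auto
  show ?thesis
    unfolding threshold_attains_def V
  proof (intro exI conjI)
    show "threshold (insert n {0..<n}) F" using threshold.isolated[OF F(1)] by simp
    show "laplacian_spectrum (insert n {0..<n}) F (add_mset 0 S)"
      "num_edges (insert n {0..<n}) F = m"
      using laplacian_spectrum_isolated[OF F(2)] F(3) by simp_all
    show "U \<subseteq># add_mset 0 S - {#0#}" using U(1) by (simp add: subset_mset.order_trans)
  qed (use U assms(2) in simp_all)
qed

lemma threshold_attains_isolated_all: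
  assumes "threshold_attains n m k"
  shows "threshold_attains (Suc n) m n"
proof -
  obtain F S where F: "threshold {0..<n} F" "laplacian_spectrum {0..<n} F S" "num_edges {0..<n} F = m"
    using assms unfolding threshold_attains_def by blast
  have V: "{0..<Suc n} = insert n {0..<n}" by auto
  have "size S = n" "sum_mset S = 2 * real m"
    using F(2,3) by (simp_all add: laplacian_spectrum_def)
  then show ?thesis
    unfolding threshold_attains_def V
    using threshold.isolated[OF F(1)] laplacian_spectrum_isolated[OF F(2)] F(3) spectral_bound_le(1)[of "Suc n" m n]
    by (intro exI[of _ F] exI[of _ "add_mset 0 S"] exI[of _ S]) simp
qed

lemma threshold_attains_dominate:
  assumes "threshold_attains n (m - n) (k - 1)" and "n \<le> m" "1 \<le> k"
    and "spectral_bound (Suc n) m k \<le> real n + real k + spectral_bound n (m - n) (k - 1)"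
  shows "threshold_attains (Suc n) m k"
proof -
  obtain F S U where F: "threshold {0..<n} F" "laplacian_spectrum {0..<n} F S" "num_edges {0..<n} F = m - n"
    and U: "U \<subseteq># S - {#0#}" "size U = k - 1" "spectral_bound n (m - n) (k - 1) \<le> sum_mset U"
    using assms(1) unfolding threshold_attains_def by blast
  have V: "{0..<Suc n} = insert n {0..<n}" by auto
  define U' where "U' = add_mset (real (Suc n)) (image_mset (\<lambda>s. s + 1) U)"
  have "sum_mset U' = real n + real k + sum_mset U"
    using U(2) assms(3) by (simp add: U'_def sum_mset.distrib)
  show ?thesis
    unfolding threshold_attains_def V
  proof (intro exI conjI)
    show "threshold (insert n {0..<n}) (dominate {0..<n} n F)"
      unfolding dominate_def by (rule threshold.dominating[OF F(1)]) simp
    show "laplacian_spectrum (insert n {0..<n}) (dominate {0..<n} n F)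
        (add_mset 0 (add_mset (real (Suc (card {0..<n}))) (image_mset (\<lambda>s. s + 1) (S - {#0#}))))"
      "num_edges (insert n {0..<n}) (dominate {0..<n} n F) = m"
      using laplacian_spectrum_dominate[OF F(2)] F(3) assms(2) by simp_all
    show "U' \<subseteq># add_mset 0 (add_mset (real (Suc (card {0..<n}))) (image_mset (\<lambda>s. s + 1) (S - {#0#}))) - {#0#}"
      using U(1) by (simp add: U'_def image_mset_subseteq_mono)
    show "size U' = k" using U(2) assms(3) by (simp add: U'_def)
    show "spectral_bound (Suc n) m k \<le> sum_mset U'"
      using assms(4) U(3) \<open>sum_mset U' = real n + real k + sum_mset U\<close> by linarith
  qed
qed

lemma threshold_attains_exists:
  assumes "0 < n" "m \<le> n choose 2" "k < n"
  shows "threshold_attains n m k"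
  using assms
proof (induction n arbitrary: m k rule: nat_induct_non_zero)
  case 1
  then show ?case using threshold_attains_one by (simp add: numeral_2_eq_2)
next
  case (Suc n)
  have attains_pos: "threshold_attains (Suc n) m j" if j: "1 \<le> j" "j \<le> n" for j
    using j
  proof (cases rule: spectral_bound_step_cases[where m = m])
    case isolated
    then consider "j = n" | "j < n" "spectral_bound (Suc n) m j \<le> spectral_bound n m j"
      using j by linarith
    then show ?thesis
    proof cases
      case 1
      then show ?thesis using threshold_attains_isolated_all Suc.IH[OF isolated(1)] Suc.hyps by blast
    next
      case 2
      then show ?thesis using threshold_attains_isolated Suc.IH[OF isolated(1)] by blast
    qed
  next
    case dominate
    have "m - n \<le> n choose 2" using Suc.prems(1) by (simp add: numeral_2_eq_2)
    then show ?thesis using threshold_attains_dominate Suc.IH dominate j by simp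
  qed
  show ?case
  proof (cases "k = 0")
    case True
    then show ?thesis using threshold_attains_zero attains_pos[of 1] Suc.hyps by simp
  next
    case False
    then show ?thesis using attains_pos Suc.prems(2) by simp
  qed
qed

lemma threshold_lap_top_sum_ge:
  assumes k: "1 \<le> k" "k \<le> n" and m: "m \<le> n choose 2"
  obtains F where "threshold {0..<n} F" "num_edges {0..<n} F = m"
    "spectral_bound n m k \<le> lap_top_sum {0..<n} F k"
proof -
  obtain F S U where F: "threshold {0..<n} F" "laplacian_spectrum {0..<n} F S" "num_edges {0..<n} F = m"
    and U: "U \<subseteq># S" "size U = k" "spectral_bound n m k \<le> sum_mset U"
  proof (cases "k < n")
    case True
    then obtain F S U where "threshold {0..<n} F" "laplacian_spectrum {0..<n} F S" "num_edges {0..<n} F = m"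
      "U \<subseteq># S - {#0#}" "size U = k" "spectral_bound n m k \<le> sum_mset U"
      using threshold_attains_exists[OF _ m True] k unfolding threshold_attains_def by auto
    moreover have "U \<subseteq># S" using \<open>U \<subseteq># S - {#0#}\<close> by (rule subset_mset.order_trans) simp
    ultimately show ?thesis using that by blast
  next
    case False
    then obtain F S where "threshold {0..<n} F" "laplacian_spectrum {0..<n} F S" "num_edges {0..<n} F = m"
      using threshold_attains_exists[OF _ m, of 0] k unfolding threshold_attains_def by auto
    moreover have "spectral_bound n m k \<le> 2 * real m" by (rule spectral_bound_le(1))
    ultimately show ?thesis
      using that[of F S S] False k by (simp add: laplacian_spectrum_def)
  qed
  then show ?thesis using that sum_mset_le_lap_top_sum[OF F(2) U(1,2)] by simp
qed

theorem corollary1: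
  fixes V :: "'a set" and E :: "'a \<Rightarrow> 'a \<Rightarrow> bool"
  assumes "cograph V E"
  shows "spectrally_threshold_dominated V E"
  unfolding spectrally_threshold_dominated_def
proof
  fix k assume k: "k \<in> {1..card V}"
  have "simple_graph V E"
    using cograph_bounded_spectrum[OF assms] by (auto simp: laplacian_spectrum_def)
  then obtain F where F: "threshold {0..<card V} F" "num_edges {0..<card V} F = num_edges V E"
    "spectral_bound (card V) (num_edges V E) k \<le> lap_top_sum {0..<card V} F k"
    using threshold_lap_top_sum_ge[of k "card V" "num_edges V E"] num_edges_le k by auto
  moreover have "lap_top_sum V E k \<le> spectral_bound (card V) (num_edges V E) k"
    using cograph_lap_top_sum_le[OF assms] k by simp
  ultimately show "\<exists>(T :: nat set) F. threshold T F \<and> card T = card V \<and>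
      num_edges T F = num_edges V E \<and> lap_top_sum T F k \<ge> lap_top_sum V E k"
    by (intro exI[of _ "{0..<card V}"] exI[of _ F]) auto
qed

end
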